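(* Let $G=(V,E,p,(V_{E},V_{O}))$ be a parity game and let $\rho: V\to\mathbb{M}$ be a game parity progress measure of $G$. Then for every vertex $v\in V$ there is a positional strategy $\sigma_{E}$ of player Even such that every play $\pi$ starting in $v$ and consistent with $\sigma_{E}$ satisfies $\theta(\pi)\le\rho(v)$.
   Context: A parity game $G=(V,E,p,(V_{E},V_{O}))$ consists of a finite set $V$ of vertices partitioned into $V_{E}$ (owned by player Even) and $V_{O}$ (owned by player Odd), a total edge relation $E\subseteq V\times V$ (every vertex has a successor), and a priority function $p:V\to\mathbb{N}$. Write $\mathrm{post}(v)=\{w:(v,w)\in E\}$ and $V_i=\{v: p(v)=i\}$. A play is an infinite path $\pi=\pi_0\pi_1\cdots$ in the graph; Even wins it iff the least priority occurring infinitely often is even, otherwise Odd wins it. A strategy of player $X$ is a partial function $\sigma:V^+\to V$, defined only on finite paths $u_1\cdots u_n$ with $u_n$ owned by $X$, and then $\sigma(u_1\cdots u_n)\in\mathrm{post}(u_n)$; it is positional if its value depends only on the last vertex. A play is consistent with $\sigma$ if $u_{n+1}=\sigma(u_1\cdots u_n)$ whenever the latter is defined. Let $d$ be one more than the largest priority in $G$. $\mathbb{M}$ is the set consisting of an extra element $\top$ together with all tuples $(m_0,\dots,m_{d-1})\in\mathbb{N}^d$ with $m_i=0$ for even $i$ and $m_i\le|V_i|$ for odd $i$; $\mathbb{M}_{ext}$ is $\{\top\}$ together with all tuples in $\mathbb{N}^d$ that are $0$ at even positions. Tuples are ordered lexicographically and $\top$ is strictly greater than every tuple. For a position $i$, $m<_i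 m'$ means $(m_0,\dots,m_i)<(m'_0,\dots,m'_i)$ lexicographically (with $\alpha<_i\top$ for tuples $\alpha$ and $\top=_i\top$), and $m=_i m'$ means the tuples agree on positions $0,\dots,i$; $\le_i,\ge_i,>_i$ are derived accordingly. For $\rho:V\to\mathbb{M}$ and $w\in\mathrm{post}(v)$, $\mathrm{Prog}(\rho,v,w)$ is the least $m\in\mathbb{M}$ such that $m\ge_{p(v)}\rho(w)$ if $p(v)$ is even, and such that $m>_{p(v)}\rho(w)$ or $m=\rho(w)=\top$ if $p(v)$ is odd. $\rho$ is a game parity progress measure if for every $v\in V_{E}$ there is $w\in\mathrm{post}(v)$ with $\rho(v)\ge_{p(v)}\mathrm{Prog}(\rho,v,w)$, and for every $v\in V_{O}$ and all $w\in\mathrm{post}(v)$, $\rho(v)\ge_{p(v)}\mathrm{Prog}(\rho,v,w)$. Play value: a stretch of a play is a finite contiguous subsequence; for a priority $k$, a $k$-dominated stretch is one whose minimal priority is $k$, and its degree is the number of its vertices of priority $k$. The value $\theta(\pi)\in\mathbb{M}_{ext}$ of a play $\pi$ is $\top$ if Odd wins $\pi$; otherwise it is the tuple which is $0$ at even positions and whose entry at each odd position $i$ is the degree of the maximal $i$-dominated stretch that is a prefix of $\pi$ (and $0$ if no prefix is $i$-dominated). *)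

theory Defs
  imports Main
begin

text \<open>A parity game is given by a vertex set V, an edge relation E, the set VE of
vertices owned by Even (Odd owns V - VE) and a priority function p.\<close>

definition parity_game :: "'v set \<Rightarrow> ('v \<times> 'v) set \<Rightarrow> 'v set \<Rightarrow> ('v \<Rightarrow> nat) \<Rightarrow> bool" where
  "parity_game V E VE p \<longleftrightarrow>
     finite V \<and> E \<subseteq> V \<times> V \<and> (\<forall>v\<in>V. \<exists>w. (v, w) \<in> E) \<and> VE \<subseteq> V"

definition post :: "('v \<times> 'v) set \<Rightarrow> 'v \<Rightarrow> 'v set" where
  "post E v = {w. (v, w) \<in> E}"

definition dim :: "'v set \<Rightarrow> ('v \<Rightarrow> nat) \<Rightarrow> nat" where
  "dim V p = Suc (Max (p ` V))"

datatype mval = Top | Tup "nat list"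

definition Mset :: "'v set \<Rightarrow> ('v \<Rightarrow> nat) \<Rightarrow> mval set" where
  "Mset V p = insert Top {Tup m | m. length m = dim V p
      \<and> (\<forall>i < dim V p. even i \<longrightarrow> m ! i = 0)
      \<and> (\<forall>i < dim V p. odd i \<longrightarrow> m ! i \<le> card {v \<in> V. p v = i})}"

definition Mext :: "'v set \<Rightarrow> ('v \<Rightarrow> nat) \<Rightarrow> mval set" where
  "Mext V p = insert Top {Tup m | m. length m = dim V p
      \<and> (\<forall>i < dim V p. even i \<longrightarrow> m ! i = 0)}"

definition lex_le :: "nat list \<Rightarrow> nat list \<Rightarrow> bool" where
  "lex_le xs ys \<longleftrightarrow> xs = ys \<or>
     (\<exists>k. k < length xs \<and> k < length ys \<and> take k xs = take k ys \<and> xs ! k < ys ! k)"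

fun mle :: "mval \<Rightarrow> mval \<Rightarrow> bool" where
  "mle _ Top = True"
| "mle Top (Tup _) = False"
| "mle (Tup a) (Tup b) = lex_le a b"

fun le_at :: "nat \<Rightarrow> mval \<Rightarrow> mval \<Rightarrow> bool" where
  "le_at i _ Top = True"
| "le_at i Top (Tup _) = False"
| "le_at i (Tup a) (Tup b) = lex_le (take (Suc i) a) (take (Suc i) b)"

definition less_at :: "nat \<Rightarrow> mval \<Rightarrow> mval \<Rightarrow> bool" where
  "less_at i m m' \<longleftrightarrow> le_at i m m' \<and> \<not> le_at i m' m"

definition ge_at :: "nat \<Rightarrow> mval \<Rightarrow> mval \<Rightarrow> bool" where
  "ge_at i m m' \<longleftrightarrow> le_at i m' m"

definition prog_cond :: "('v \<Rightarrow> nat) \<Rightarrow> ('v \<Rightarrow> mval) \<Rightarrow> 'v \<Rightarrow> 'v \<Rightarrow> mval \<Rightarrow> bool" where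
  "prog_cond p \<rho> v w m \<longleftrightarrow>
     (if even (p v) then ge_at (p v) m (\<rho> w)
      else less_at (p v) (\<rho> w) m \<or> (m = Top \<and> \<rho> w = Top))"

definition Prog :: "'v set \<Rightarrow> ('v \<Rightarrow> nat) \<Rightarrow> ('v \<Rightarrow> mval) \<Rightarrow> 'v \<Rightarrow> 'v \<Rightarrow> mval" where
  "Prog V p \<rho> v w = (THE m. m \<in> Mset V p \<and> prog_cond p \<rho> v w m
       \<and> (\<forall>m' \<in> Mset V p. prog_cond p \<rho> v w m' \<longrightarrow> mle m m'))"

definition game_ppm :: "'v set \<Rightarrow> ('v \<times> 'v) set \<Rightarrow> 'v set \<Rightarrow> ('v \<Rightarrow> nat) \<Rightarrow> ('v \<Rightarrow> mval) \<Rightarrow> bool" where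
  "game_ppm V E VE p \<rho> \<longleftrightarrow>
     (\<forall>v \<in> V. \<rho> v \<in> Mset V p)
   \<and> (\<forall>v \<in> VE. \<exists>w \<in> post E v. ge_at (p v) (\<rho> v) (Prog V p \<rho> v w))
   \<and> (\<forall>v \<in> V - VE. \<forall>w \<in> post E v. ge_at (p v) (\<rho> v) (Prog V p \<rho> v w))"

definition is_play :: "('v \<times> 'v) set \<Rightarrow> (nat \<Rightarrow> 'v) \<Rightarrow> bool" where
  "is_play E \<pi> \<longleftrightarrow> (\<forall>n. (\<pi> n, \<pi> (Suc n)) \<in> E)"

definition even_wins :: "('v \<Rightarrow> nat) \<Rightarrow> (nat \<Rightarrow> 'v) \<Rightarrow> bool" where
  "even_wins p \<pi> \<longleftrightarrow> even (Min {k. \<exists>\<^sub>\<infinity>n. p (\<pi> n) = k})"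

definition positional_strategy_even :: "('v \<times> 'v) set \<Rightarrow> 'v set \<Rightarrow> ('v \<Rightarrow> 'v) \<Rightarrow> bool" where
  "positional_strategy_even E VE \<sigma> \<longleftrightarrow> (\<forall>v \<in> VE. \<sigma> v \<in> post E v)"

definition consistent_pos :: "'v set \<Rightarrow> ('v \<Rightarrow> 'v) \<Rightarrow> (nat \<Rightarrow> 'v) \<Rightarrow> bool" where
  "consistent_pos VE \<sigma> \<pi> \<longleftrightarrow> (\<forall>n. \<pi> n \<in> VE \<longrightarrow> \<pi> (Suc n) = \<sigma> (\<pi> n))"

definition dominated_prefix :: "('v \<Rightarrow> nat) \<Rightarrow> (nat \<Rightarrow> 'v) \<Rightarrow> nat \<Rightarrow> nat \<Rightarrow> bool" where
  "dominated_prefix p \<pi> i k \<longleftrightarrow> 0 < k \<and> Min ((\<lambda>n. p (\<pi> n)) ` {..<k}) = i"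

definition prefix_degree :: "('v \<Rightarrow> nat) \<Rightarrow> (nat \<Rightarrow> 'v) \<Rightarrow> nat \<Rightarrow> nat \<Rightarrow> nat" where
  "prefix_degree p \<pi> i k = card {n. n < k \<and> p (\<pi> n) = i}"

definition max_dom_degree :: "('v \<Rightarrow> nat) \<Rightarrow> (nat \<Rightarrow> 'v) \<Rightarrow> nat \<Rightarrow> nat" where
  "max_dom_degree p \<pi> i =
     Max (insert 0 {prefix_degree p \<pi> i k | k. dominated_prefix p \<pi> i k})"

definition theta :: "'v set \<Rightarrow> ('v \<Rightarrow> nat) \<Rightarrow> (nat \<Rightarrow> 'v) \<Rightarrow> mval" where
  "theta V p \<pi> = (if \<not> even_wins p \<pi> then Top
     else Tup (map (\<lambda>i. if even i then 0 else max_dom_degree p \<pi> i) [0..<dim V p]))"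

end

theory Submission
  imports Defs "HOL-Library.Omega_Words_Fun"
begin

text \<open>Even moves, at each of her vertices, to a successor witnessing the progress-measure
  inequality. Along any play consistent with this choice, \<open>\<rho>\<close> then descends in the truncated
  lexicographic order: at a vertex of priority \<open>q\<close> its first \<open>q + 1\<close> entries do not increase,
  and they strictly decrease if \<open>q\<close> is odd. Reading bounded tuples as base-\<open>b\<close> numerals turns
  this into descent of natural numbers. Hence the least priority seen infinitely often is even,
  and every \<open>i\<close>-dominated stretch starting at \<open>n\<close> has at most \<open>\<rho>(\<pi>\<^sub>n)\<^sub>i\<close> vertices of priority
  \<open>i\<close> as long as the entries below \<open>i\<close> have not yet dropped; an induction on the position \<open>i\<close>
  then bounds \<open>\<theta>(\<pi>)\<close> by \<open>\<rho>(v)\<close>.\<close>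

section \<open>Lexicographic order and base-\<open>b\<close> numerals\<close>

fun base_val :: "nat \<Rightarrow> nat list \<Rightarrow> nat" where
  "base_val b [] = 0"
| "base_val b (x # xs) = x * b ^ length xs + base_val b xs"

lemma base_val_less_power: "(\<And>x. x \<in> set xs \<Longrightarrow> x < b) \<Longrightarrow> base_val b xs < b ^ length xs"
proof (induction xs)
  case (Cons x xs)
  then have "base_val b (x # xs) < (x + 1) * b ^ length xs" by simp
  also have "\<dots> \<le> b * b ^ length xs" using Cons.prems[of x] by (intro mult_right_mono) auto
  finally show ?case by simp
qed simp

lemma base_val_snoc: "base_val b (xs @ [x]) = base_val b xs * b + x"
  by (induction xs) (auto simp: algebra_simps)

lemma lex_le_Cons: "lex_le (x # xs) (y # ys) \<longleftrightarrow> x < y \<or> (x = y \<and> lex_le xs ys)"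
proof
  assume "lex_le (x # xs) (y # ys)"
  then consider "x # xs = y # ys" | k where "k < Suc (length xs)" "k < Suc (length ys)"
     "take k (x # xs) = take k (y # ys)" "(x # xs) ! k < (y # ys) ! k"
    unfolding lex_le_def by auto
  then show "x < y \<or> (x = y \<and> lex_le xs ys)"
  proof cases
    case (2 k)
    then show ?thesis unfolding lex_le_def by (cases k) auto
  qed (simp add: lex_le_def)
next
  assume "x < y \<or> (x = y \<and> lex_le xs ys)"
  then consider "x < y" | "x = y" "xs = ys" | k where "x = y" "k < length xs" "k < length ys"
      "take k xs = take k ys" "xs ! k < ys ! k"
    unfolding lex_le_def by auto
  then show "lex_le (x # xs) (y # ys)"
  proof cases
    case 1 then show ?thesis unfolding lex_le_def by (intro disjI2 exI[of _ 0]) auto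
  next
    case (3 k) then show ?thesis unfolding lex_le_def by (intro disjI2 exI[of _ "Suc k"]) auto
  qed (simp add: lex_le_def)
qed

lemma lex_le_iff_base_val:
  assumes "length xs = length ys" "\<And>x. x \<in> set xs \<Longrightarrow> x < b" "\<And>y. y \<in> set ys \<Longrightarrow> y < b"
  shows "lex_le xs ys \<longleftrightarrow> base_val b xs \<le> base_val b ys"
  using assms
proof (induction xs arbitrary: ys)
  case Nil then show ?case by (simp add: lex_le_def)
next
  case (Cons x xs ys)
  then obtain y ys' where ys: "ys = y # ys'" by (cases ys) auto
  let ?P = "b ^ length xs"
  have rest: "base_val b xs < ?P" "base_val b ys' < ?P"
    using Cons.prems ys base_val_less_power[of xs b] base_val_less_power[of ys' b] by auto
  have leading: "u * ?P + e < w * ?P + f" if "u < w" "e < ?P" for u w e f :: nat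
  proof -
    have "u * ?P + e < (u + 1) * ?P" using that by simp
    also have "\<dots> \<le> w * ?P" using that by (intro mult_right_mono) auto
    finally show ?thesis by simp
  qed
  have "x * ?P + base_val b xs \<le> y * ?P + base_val b ys'
        \<longleftrightarrow> x < y \<or> (x = y \<and> base_val b xs \<le> base_val b ys')"
  proof (cases x y rule: linorder_cases)
    case less then show ?thesis using leading[OF less rest(1), of "base_val b ys'"] by simp
  next
    case greater then show ?thesis using leading[OF greater rest(2), of "base_val b xs"] by simp
  qed simp
  moreover have "lex_le xs ys' \<longleftrightarrow> base_val b xs \<le> base_val b ys'"
    using Cons ys by simp
  ultimately show ?case using ys Cons.prems(1) by (simp add: lex_le_Cons)
qed

lemma lex_le_antisym: "lex_le xs ys \<Longrightarrow> lex_le ys xs \<Longrightarrow> xs = ys"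
proof (rule ccontr)
  assume "lex_le xs ys" "lex_le ys xs" "xs \<noteq> ys"
  then obtain k l where
    k: "k < length xs" "take k xs = take k ys" "xs ! k < ys ! k" and
    l: "l < length ys" "take l ys = take l xs" "ys ! l < xs ! l"
    unfolding lex_le_def by auto
  have "xs ! l = ys ! l" if "l < k" using k(2) that by (metis nth_take)
  moreover have "ys ! k = xs ! k" if "k < l" using l(2) that by (metis nth_take)
  ultimately show False using k l by (cases k l rule: linorder_cases) auto
qed

lemma lex_le_trans: "lex_le xs ys \<Longrightarrow> lex_le ys zs \<Longrightarrow> lex_le xs zs"
proof -
  assume xy: "lex_le xs ys" and yz: "lex_le ys zs"
  show "lex_le xs zs"
  proof (cases "xs = ys \<or> ys = zs")
    case True then show ?thesis using xy yz by auto
  next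
    case False
    then obtain k l where
      k: "k < length xs" "k < length ys" "take k xs = take k ys" "xs ! k < ys ! k" and
      l: "l < length ys" "l < length zs" "take l ys = take l zs" "ys ! l < zs ! l"
      using xy yz unfolding lex_le_def by auto
    have "ys ! l = xs ! l" if "l < k" using k(3) that by (metis nth_take)
    moreover have "ys ! k = zs ! k" if "k < l" using l(3) that by (metis nth_take)
    moreover have "take (min k l) xs = take (min k l) zs"
      using k(3) l(3) by (metis min.commute min.idem take_take)
    ultimately show ?thesis unfolding lex_le_def using k l
      by (intro disjI2 exI[of _ "min k l"]) (cases k l rule: linorder_cases, auto)
  qed
qed

lemma lex_le_take:
  assumes "lex_le xs ys" shows "lex_le (take n xs) (take n ys)"
proof -
  from assms consider "xs = ys" | k where "k < length xs" "k < length ys"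
      "take k xs = take k ys" "xs ! k < ys ! k"
    unfolding lex_le_def by auto
  then show ?thesis
  proof cases
    case (2 k)
    show ?thesis
    proof (cases "k < n")
      case True
      then show ?thesis unfolding lex_le_def using 2
        by (intro disjI2 exI[of _ k]) (auto simp: min_def)
    next
      case False
      then have "take n xs = take n ys" using 2 by (metis min.absorb1 not_less take_take)
      then show ?thesis by (simp add: lex_le_def)
    qed
  qed (simp add: lex_le_def)
qed

lemma lex_le_take_Suc:
  assumes "lex_le (take i xs) (take i ys)" "i < length xs" "i < length ys"
    and "take i xs = take i ys \<Longrightarrow> xs ! i \<le> ys ! i"
  shows "lex_le (take (Suc i) xs) (take (Suc i) ys)"
proof (cases "take i xs = take i ys")
  case True
  then show ?thesis using assms
    unfolding lex_le_def by (auto simp: take_Suc_conv_app_nth nth_append intro!: exI[of _ i])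
next
  case False
  then obtain k where "k < length (take i xs)"
    "take k (take i xs) = take k (take i ys)" "take i xs ! k < take i ys ! k"
    using assms(1) unfolding lex_le_def by auto
  then show ?thesis unfolding lex_le_def using assms(2,3)
    by (intro disjI2 exI[of _ k]) (simp add: min_def)
qed

lemma not_lex_le_take_if_base_val_drops:
  assumes "length xs = length ys" "i < length xs"
    and "\<And>x. x \<in> set xs \<Longrightarrow> x < b" "\<And>y. y \<in> set ys \<Longrightarrow> y < b"
    and "base_val b (take (Suc i) ys) + c \<le> base_val b (take (Suc i) xs)" "xs ! i < c"
  shows "\<not> lex_le (take i xs) (take i ys)"
proof
  assume "lex_le (take i xs) (take i ys)"
  moreover have "lex_le (take i xs) (take i ys) \<longleftrightarrow> base_val b (take i xs) \<le> base_val b (take i ys)"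
    by (rule lex_le_iff_base_val) (use assms(1-4) in \<open>auto dest: in_set_takeD\<close>)
  ultimately have "base_val b (take i xs) \<le> base_val b (take i ys)" by blast
  then have "base_val b (take i xs) * b \<le> base_val b (take i ys) * b" by simp
  moreover have "base_val b (take i ys) * b + ys ! i + c \<le> base_val b (take i xs) * b + xs ! i"
    using assms(1,2,5) by (simp add: take_Suc_conv_app_nth base_val_snoc)
  ultimately show False using assms(6) by linarith
qed

lemma Tup_in_MsetD:
  assumes "finite V" "Tup m \<in> Mset V p"
  shows "length m = dim V p" "x \<in> set m \<Longrightarrow> x < Suc (card V)"
proof -
  show "length m = dim V p" using assms(2) unfolding Mset_def by auto
  assume "x \<in> set m"
  then obtain i where i: "i < length m" "m ! i = x" by (auto simp: in_set_conv_nth)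
  have "card {v \<in> V. p v = i} \<le> card V" using assms(1) by (intro card_mono) auto
  then show "x < Suc (card V)" using assms(2) i unfolding Mset_def by (cases "even i") auto
qed

text \<open>An order embedding of \<open>Mset V p\<close> into \<open>\<nat>\<close>; it makes the least element in the definition
  of \<open>Prog\<close> exist.\<close>

fun mval_rank :: "nat \<Rightarrow> nat \<Rightarrow> mval \<Rightarrow> nat" where
  "mval_rank b d Top = b ^ d"
| "mval_rank b d (Tup m) = base_val b m"

lemma mle_iff_mval_rank:
  assumes "finite V" "x \<in> Mset V p" "y \<in> Mset V p"
  shows "mle x y \<longleftrightarrow> mval_rank (Suc (card V)) (dim V p) x \<le> mval_rank (Suc (card V)) (dim V p) y"
proof -
  have bound: "base_val (Suc (card V)) m < Suc (card V) ^ dim V p" if "Tup m \<in> Mset V p" for m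
    using base_val_less_power Tup_in_MsetD[OF assms(1) that] by metis
  show ?thesis
  proof (cases x; cases y)
    fix m n assume "x = Tup m" "y = Tup n"
    then show ?thesis
      using assms Tup_in_MsetD[OF assms(1)] by (simp add: lex_le_iff_base_val)
  qed (use assms in \<open>auto dest: bound\<close>)
qed

lemma mle_antisym: "mle x y \<Longrightarrow> mle y x \<Longrightarrow> x = y"
  by (cases x; cases y) (auto intro: lex_le_antisym)

lemma prog_cond_Top: "prog_cond p \<rho> v w Top"
  by (cases "\<rho> w") (auto simp: prog_cond_def ge_at_def less_at_def)

lemma Prog_least:
  assumes "finite V"
  shows "Prog V p \<rho> v w \<in> Mset V p" and "prog_cond p \<rho> v w (Prog V p \<rho> v w)"
proof -
  let ?Q = "\<lambda>m. m \<in> Mset V p \<and> prog_cond p \<rho> v w m"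
  let ?rank = "mval_rank (Suc (card V)) (dim V p)"
  have "?Q Top" using prog_cond_Top by (simp add: Mset_def)
  then obtain m0 where m0: "?Q m0" "\<And>m. ?Q m \<Longrightarrow> ?rank m0 \<le> ?rank m"
    using ex_has_least_nat[of ?Q Top ?rank] by blast
  then have least: "?Q m0 \<and> (\<forall>m \<in> Mset V p. prog_cond p \<rho> v w m \<longrightarrow> mle m0 m)"
    using mle_iff_mval_rank[OF assms] by blast
  have "?Q (Prog V p \<rho> v w)"
    unfolding Prog_def by (rule theI2[of _ m0]) (use least mle_antisym in blast)+
  then show "Prog V p \<rho> v w \<in> Mset V p" "prog_cond p \<rho> v w (Prog V p \<rho> v w)" by auto
qed

lemma descent_via_Prog:
  assumes "finite V" "\<rho> v = Tup a" "ge_at (p v) (\<rho> v) (Prog V p \<rho> v w)"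
  obtains c where "\<rho> w = Tup c" "lex_le (take (Suc (p v)) c) (take (Suc (p v)) a)"
    and "odd (p v) \<Longrightarrow> take (Suc (p v)) c \<noteq> take (Suc (p v)) a"
proof -
  let ?t = "take (Suc (p v))"
  obtain g where g: "Prog V p \<rho> v w = Tup g" "lex_le (?t g) (?t a)"
    using assms(2,3) by (cases "Prog V p \<rho> v w") (auto simp: ge_at_def)
  have cond: "prog_cond p \<rho> v w (Tup g)" using Prog_least(2)[OF assms(1)] g(1) by metis
  then obtain c where c: "\<rho> w = Tup c" "lex_le (?t c) (?t g)"
    by (cases "\<rho> w") (auto simp: prog_cond_def ge_at_def less_at_def split: if_splits)
  have "?t c \<noteq> ?t a" if "odd (p v)"
  proof
    assume "?t c = ?t a"
    moreover have "\<not> lex_le (?t g) (?t c)" using cond c(1) that by (simp add: prog_cond_def less_at_def)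
    ultimately show False using g(2) by simp
  qed
  then show thesis using that c lex_le_trans[OF c(2) g(2)] by blast
qed

section \<open>Priorities along plays\<close>

lemma descent_count:
  fixes f :: "nat \<Rightarrow> nat"
  assumes "\<And>m. m < K \<Longrightarrow> f (Suc m) \<le> f m" and "\<And>m. m < K \<Longrightarrow> P m \<Longrightarrow> f (Suc m) < f m"
  shows "f K + card {m. m < K \<and> P m} \<le> f 0"
  using assms
proof (induction K)
  case (Suc K)
  have "f K + card {m. m < K \<and> P m} \<le> f 0" using Suc by simp
  moreover have "{m. m < Suc K \<and> P m} = (if P K then insert K else id) {m. m < K \<and> P m}"
    by (auto simp: less_Suc_eq)
  ultimately show ?case using Suc.prems[of K] by (cases "P K") auto
qed simp

lemma not_infinitely_often_descending:
  fixes f :: "nat \<Rightarrow> nat"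
  assumes "\<And>n. N \<le> n \<Longrightarrow> f (Suc n) \<le> f n"
  shows "\<not> (\<exists>\<^sub>\<infinity>n. f (Suc n) < f n)"
proof
  let ?S = "{m. f (Suc (N + m)) < f (N + m)}"
  assume "\<exists>\<^sub>\<infinity>n. f (Suc n) < f n"
  then have "\<exists>n>m. n \<in> ?S" for m
  proof -
    obtain n where "n > N + m" "f (Suc n) < f n"
      using \<open>\<exists>\<^sub>\<infinity>n. f (Suc n) < f n\<close> unfolding INFM_nat by blast
    then show ?thesis by (intro exI[of _ "n - N"]) auto
  qed
  then have "infinite ?S" by (simp add: infinite_nat_iff_unbounded)
  then obtain B where B: "B \<subseteq> ?S" "finite B" "card B = Suc (f N)"
    using infinite_arbitrarily_large by blast
  then obtain K where "B \<subseteq> {..<K}" using finite_nat_bounded by blast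
  with B(1) have "card B \<le> card {m. m < K \<and> m \<in> ?S}" by (intro card_mono) auto
  also have "\<dots> \<le> f N"
    using descent_count[of K "\<lambda>m. f (N + m)" "\<lambda>m. m \<in> ?S"] assms by simp
  finally show False using B(3) by simp
qed

text \<open>If the least priority \<open>k\<close> seen infinitely often were odd, \<open>f k\<close> would eventually never
  increase, yet decrease at every later visit of priority \<open>k\<close>.\<close>

lemma even_wins_if_ranks_descend:
  fixes f :: "nat \<Rightarrow> nat \<Rightarrow> nat"
  assumes fin: "finite (range (\<lambda>n. p (\<pi> n)))"
    and mono: "\<And>i n. i \<le> p (\<pi> n) \<Longrightarrow> f i (Suc n) \<le> f i n"
    and strict: "\<And>n. odd (p (\<pi> n)) \<Longrightarrow> f (p (\<pi> n)) (Suc n) < f (p (\<pi> n)) n"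
  shows "even_wins p \<pi>"
proof (rule ccontr)
  let ?x = "\<lambda>n. p (\<pi> n)"
  define k where "k = Min (limit ?x)"
  obtain N where N: "limit ?x = range (suffix N ?x)" using limit_is_suffix[OF fin] by blast
  have "finite (limit ?x)" by (rule finite_subset[OF limit_in_range fin])
  moreover have "limit ?x \<noteq> {}" using limit_nonempty[OF fin] by blast
  ultimately have k_lim: "k \<in> limit ?x" and k_le: "\<And>y. y \<in> limit ?x \<Longrightarrow> k \<le> y"
    unfolding k_def by auto
  have "?x n \<in> limit ?x" if "N \<le> n" for n
    unfolding N using that by (metis le_add_diff_inverse rangeI suffix_nth)
  then have ge_k: "k \<le> ?x n" if "N \<le> n" for n using k_le that by blast
  assume "\<not> even_wins p \<pi>"
  then have "odd k" unfolding even_wins_def k_def limit_def by simp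
  have "\<exists>\<^sub>\<infinity>n. ?x n = k" using k_lim by (simp add: limit_iff_frequent)
  then have "\<exists>\<^sub>\<infinity>n. f k (Suc n) < f k n"
    by (rule INFM_mono) (use strict \<open>odd k\<close> in metis)
  moreover have "f k (Suc n) \<le> f k n" if "N \<le> n" for n using mono ge_k that by blast
  ultimately show False using not_infinitely_often_descending by blast
qed

lemma dominated_prefix_priority_ge: "dominated_prefix p \<pi> i K \<Longrightarrow> m < K \<Longrightarrow> i \<le> p (\<pi> m)"
  unfolding dominated_prefix_def by (metis Min_le finite_imageI finite_lessThan image_eqI lessThan_iff)

lemma dominated_prefix_Suc_iff:
  assumes "j < p (\<pi> 0)"
  shows "dominated_prefix p \<pi> j (Suc k) \<longleftrightarrow> dominated_prefix p (suffix 1 \<pi>) j k"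
proof -
  have image: "(\<lambda>n. p (\<pi> n)) ` {..<Suc k} = insert (p (\<pi> 0)) ((\<lambda>n. p (suffix 1 \<pi> n)) ` {..<k})"
    by (simp add: lessThan_Suc_eq_insert_0 image_image)
  show ?thesis
  proof (cases k)
    case 0 then show ?thesis using assms by (simp add: dominated_prefix_def lessThan_Suc)
  next
    case (Suc k')
    then have "Min ((\<lambda>n. p (\<pi> n)) ` {..<Suc k})
        = min (p (\<pi> 0)) (Min ((\<lambda>n. p (suffix 1 \<pi> n)) ` {..<k}))"
      unfolding image by (subst Min_insert) auto
    then show ?thesis using assms Suc unfolding dominated_prefix_def by (auto simp: min_def)
  qed
qed

lemma prefix_degree_Suc:
  assumes "p (\<pi> 0) \<noteq> j"
  shows "prefix_degree p \<pi> j (Suc k) = prefix_degree p (suffix 1 \<pi>) j k"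
proof -
  have "{n. n < Suc k \<and> p (\<pi> n) = j} = Suc ` {n. n < k \<and> p (suffix 1 \<pi> n) = j}"
    using assms by (auto simp: image_iff less_Suc_eq_0_disj)
  then show ?thesis unfolding prefix_degree_def by (simp add: card_image)
qed

lemma max_dom_degree_Suc:
  assumes "j < p (\<pi> 0)"
  shows "max_dom_degree p (suffix 1 \<pi>) j = max_dom_degree p \<pi> j"
proof -
  have dom: "{k. dominated_prefix p \<pi> j k} = Suc ` {k. dominated_prefix p (suffix 1 \<pi>) j k}"
    using assms dominated_prefix_Suc_iff[of j p \<pi>]
    by (auto simp: image_iff dominated_prefix_def gr0_conv_Suc)
  have "{prefix_degree p \<pi> j k | k. dominated_prefix p \<pi> j k}
      = prefix_degree p \<pi> j ` {k. dominated_prefix p \<pi> j k}" by blast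
  also have "\<dots> = prefix_degree p (suffix 1 \<pi>) j ` {k. dominated_prefix p (suffix 1 \<pi>) j k}"
    unfolding dom image_image using prefix_degree_Suc[of p \<pi> j] assms by simp
  also have "\<dots> = {prefix_degree p (suffix 1 \<pi>) j k | k. dominated_prefix p (suffix 1 \<pi>) j k}"
    by blast
  finally show ?thesis unfolding max_dom_degree_def by simp
qed

lemma max_dom_degree_suffix:
  assumes "\<And>m. m < K \<Longrightarrow> j < p (\<pi> m)"
  shows "max_dom_degree p (suffix K \<pi>) j = max_dom_degree p \<pi> j"
  using assms
proof (induction K arbitrary: \<pi>)
  case (Suc K)
  have "max_dom_degree p (suffix K (suffix 1 \<pi>)) j = max_dom_degree p (suffix 1 \<pi>) j"
    by (rule Suc.IH) (use Suc.prems in simp)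
  also have "\<dots> = max_dom_degree p \<pi> j" using Suc.prems by (intro max_dom_degree_Suc) auto
  finally show ?case by (simp add: suffix_def)
qed simp

lemma less_max_dom_degreeE:
  assumes "r < max_dom_degree p \<pi> i"
  obtains K where "dominated_prefix p \<pi> i K" "r < prefix_degree p \<pi> i K"
proof -
  let ?S = "{prefix_degree p \<pi> i k | k. dominated_prefix p \<pi> i k}"
  have "\<exists>x\<in>?S. r < x"
  proof (cases "finite ?S")
    case True
    then have "Max (insert 0 ?S) \<in> insert 0 ?S" by (intro Max_in) auto
    then show ?thesis using assms unfolding max_dom_degree_def by auto
  qed (use infinite_nat_iff_unbounded in blast)
  then show thesis using that by blast
qed

definition degree_tuple :: "nat \<Rightarrow> ('v \<Rightarrow> nat) \<Rightarrow> (nat \<Rightarrow> 'v) \<Rightarrow> nat list" where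
  "degree_tuple d p \<pi> = map (\<lambda>i. if even i then 0 else max_dom_degree p \<pi> i) [0..<d]"

lemma length_degree_tuple [simp]: "length (degree_tuple d p \<pi>) = d"
  by (simp add: degree_tuple_def)

lemma theta_if_even_wins: "even_wins p \<pi> \<Longrightarrow> theta V p \<pi> = Tup (degree_tuple (dim V p) p \<pi>)"
  by (simp add: theta_def degree_tuple_def)

lemma take_degree_tuple_suffix:
  assumes "\<And>m. m < K \<Longrightarrow> i \<le> p (\<pi> m)"
  shows "take i (degree_tuple d p (suffix K \<pi>)) = take i (degree_tuple d p \<pi>)"
proof -
  have "max_dom_degree p (suffix K \<pi>) j = max_dom_degree p \<pi> j" if "j < i" for j
    using assms that by (intro max_dom_degree_suffix) (meson less_le_trans)
  moreover have "j < i" if "j \<in> set (take i [0..<d])" for j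
    using that by (cases "i \<le> d") auto
  ultimately show ?thesis by (auto simp: degree_tuple_def take_map)
qed

section \<open>Descent of a progress measure along a play\<close>

text \<open>\<open>R n\<close> is the value of the progress measure at the \<open>n\<close>-th vertex of a play consistent with
  the strategy it induces.\<close>

locale descending_trace =
  fixes p :: "'v \<Rightarrow> nat" and \<pi> :: "nat \<Rightarrow> 'v" and R :: "nat \<Rightarrow> nat list" and d b :: nat
  assumes length_R: "length (R n) = d"
    and R_less: "x \<in> set (R n) \<Longrightarrow> x < b"
    and priority_less: "p (\<pi> n) < d"
    and descent: "lex_le (take (Suc (p (\<pi> n))) (R (Suc n))) (take (Suc (p (\<pi> n))) (R n))"
    and strict_descent:
      "odd (p (\<pi> n)) \<Longrightarrow> take (Suc (p (\<pi> n))) (R (Suc n)) \<noteq> take (Suc (p (\<pi> n))) (R n)"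
begin

definition rank :: "nat \<Rightarrow> nat \<Rightarrow> nat" where
  "rank i n = base_val b (take (Suc i) (R n))"

lemma lex_le_take_iff_rank:
  "lex_le (take (Suc i) (R m)) (take (Suc i) (R n)) \<longleftrightarrow> rank i m \<le> rank i n"
  unfolding rank_def by (rule lex_le_iff_base_val) (auto simp: length_R dest: in_set_takeD R_less)

lemma rank_mono: "i \<le> p (\<pi> n) \<Longrightarrow> rank i (Suc n) \<le> rank i n"
  using lex_le_take[OF descent, of "Suc i" n] by (simp add: lex_le_take_iff_rank min_def)

lemma rank_strict_mono: "odd (p (\<pi> n)) \<Longrightarrow> rank (p (\<pi> n)) (Suc n) < rank (p (\<pi> n)) n"
  using descent[of n] strict_descent[of n] lex_le_antisym lex_le_take_iff_rank by (meson not_le)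

lemma even_wins: "even_wins p \<pi>"
proof (rule even_wins_if_ranks_descend[where f = rank])
  have "range (\<lambda>n. p (\<pi> n)) \<subseteq> {..<d}" using priority_less by blast
  then show "finite (range (\<lambda>n. p (\<pi> n)))" by (rule finite_subset) simp
qed (fact rank_mono, fact rank_strict_mono)

lemma rank_drop_along_dominated_prefix:
  assumes "odd i" "dominated_prefix p (suffix n \<pi>) i K"
  shows "rank i (n + K) + prefix_degree p (suffix n \<pi>) i K \<le> rank i n"
proof -
  have "i \<le> p (\<pi> (n + m))" if "m < K" for m
    using dominated_prefix_priority_ge[OF assms(2) that] by simp
  then show ?thesis
    using descent_count[of K "\<lambda>m. rank i (n + m)" "\<lambda>m. p (\<pi> (n + m)) = i"]
      rank_mono rank_strict_mono assms(1)
    by (fastforce simp: prefix_degree_def)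
qed

text \<open>If the degree tuple of the suffix from \<open>n\<close> agreed with \<open>R n\<close> below position \<open>i\<close> but
  exceeded it at \<open>i\<close>, then \<open>i\<close> would be odd and some \<open>i\<close>-dominated stretch from \<open>n\<close> would contain
  more than \<open>R n ! i\<close> vertices of priority \<open>i\<close>. Each of them strictly lowers the rank, so the
  first \<open>i\<close> positions of \<open>R\<close> drop strictly across the stretch, while the degree tuple keeps
  them; this contradicts the induction hypothesis at the end of the stretch.\<close>

lemma take_degree_tuple_le: "lex_le (take i (degree_tuple d p (suffix n \<pi>))) (take i (R n))"
proof (induction i arbitrary: n)
  case 0 show ?case by (simp add: lex_le_def)
next
  case (Suc i)
  let ?\<Theta> = "\<lambda>n. degree_tuple d p (suffix n \<pi>)"
  show ?case
  proof (cases "i < d")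
    case False
    then show ?thesis using Suc.IH[of n] length_R by simp
  next
    case True
    have "?\<Theta> n ! i \<le> R n ! i" if eq: "take i (?\<Theta> n) = take i (R n)"
    proof (rule ccontr)
      assume "\<not> ?\<Theta> n ! i \<le> R n ! i"
      then have less: "R n ! i < ?\<Theta> n ! i" by simp
      have "odd i" and "R n ! i < max_dom_degree p (suffix n \<pi>) i"
        using less True by (auto simp: degree_tuple_def split: if_splits)
      then obtain K where K: "dominated_prefix p (suffix n \<pi>) i K"
        "R n ! i < prefix_degree p (suffix n \<pi>) i K"
        by (elim less_max_dom_degreeE)
      have "\<not> lex_le (take i (R n)) (take i (R (n + K)))"
      proof (rule not_lex_le_take_if_base_val_drops)
        show "base_val b (take (Suc i) (R (n + K))) + prefix_degree p (suffix n \<pi>) i K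
            \<le> base_val b (take (Suc i) (R n))"
          using rank_drop_along_dominated_prefix[OF \<open>odd i\<close> K(1)] by (simp add: rank_def)
      qed (use K(2) True length_R R_less in auto)
      moreover have "take i (?\<Theta> (n + K)) = take i (?\<Theta> n)"
        using take_degree_tuple_suffix[of K i p "suffix n \<pi>" d] dominated_prefix_priority_ge[OF K(1)]
        by simp
      ultimately show False using Suc.IH[of "n + K"] eq by metis
    qed
    from lex_le_take_Suc[OF Suc.IH _ _ this] show ?thesis
      using True length_R by (simp add: suffix_def)
  qed
qed

lemma degree_tuple_le: "lex_le (degree_tuple d p \<pi>) (R 0)"
  using take_degree_tuple_le[of d 0] length_R by simp

end

lemma ppm_strategy:
  assumes "game_ppm V E VE p \<rho>"
  obtains \<sigma> where "positional_strategy_even E VE \<sigma>"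
    and "\<And>u. u \<in> VE \<Longrightarrow> ge_at (p u) (\<rho> u) (Prog V p \<rho> u (\<sigma> u))"
proof -
  have "\<forall>u\<in>VE. \<exists>w. w \<in> post E u \<and> ge_at (p u) (\<rho> u) (Prog V p \<rho> u w)"
    using assms unfolding game_ppm_def by blast
  then obtain \<sigma> where "\<forall>u\<in>VE. \<sigma> u \<in> post E u \<and> ge_at (p u) (\<rho> u) (Prog V p \<rho> u (\<sigma> u))"
    by metis
  then show thesis using that unfolding positional_strategy_even_def by blast
qed

lemma play_in_vertices:
  assumes "parity_game V E VE p" "is_play E \<pi>" "\<pi> 0 \<in> V"
  shows "\<pi> n \<in> V"
proof (induction n)
  case (Suc n)
  then show ?case using assms unfolding parity_game_def is_play_def by blast
qed (use assms in simp)

lemma ppm_bounds_theta: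
  assumes game: "parity_game V E VE p" and ppm: "game_ppm V E VE p \<rho>"
    and play: "is_play E \<pi>" "\<pi> 0 \<in> V"
    and steps: "\<And>n. ge_at (p (\<pi> n)) (\<rho> (\<pi> n)) (Prog V p \<rho> (\<pi> n) (\<pi> (Suc n)))"
  shows "mle (theta V p \<pi>) (\<rho> (\<pi> 0))"
proof (cases "\<rho> (\<pi> 0)")
  case (Tup a)
  have fin: "finite V" using game unfolding parity_game_def by blast
  have in_M: "\<rho> (\<pi> n) \<in> Mset V p" for n
    using ppm play_in_vertices[OF game play] unfolding game_ppm_def by blast
  have "\<exists>c. \<rho> (\<pi> n) = Tup c" for n
  proof (induction n)
    case (Suc n)
    then obtain c where "\<rho> (\<pi> n) = Tup c" by blast
    from descent_via_Prog[OF fin this steps] show ?case by metis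
  qed (use Tup in simp)
  then obtain R where R: "\<And>n. \<rho> (\<pi> n) = Tup (R n)" by metis
  interpret descending_trace p \<pi> R "dim V p" "Suc (card V)"
  proof
    fix n
    show "length (R n) = dim V p" "\<And>x. x \<in> set (R n) \<Longrightarrow> x < Suc (card V)"
      using Tup_in_MsetD[OF fin] in_M[of n] R[of n] by auto
    show "p (\<pi> n) < dim V p"
      using fin play_in_vertices[OF game play] unfolding dim_def by (simp add: less_Suc_eq_le)
    show "lex_le (take (Suc (p (\<pi> n))) (R (Suc n))) (take (Suc (p (\<pi> n))) (R n))"
      "odd (p (\<pi> n)) \<Longrightarrow> take (Suc (p (\<pi> n))) (R (Suc n)) \<noteq> take (Suc (p (\<pi> n))) (R n)"
      by (rule descent_via_Prog[OF fin R[of n] steps]; use R[of "Suc n"] in simp)+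
  qed
  show ?thesis using theta_if_even_wins[OF even_wins] degree_tuple_le R[of 0] by simp
qed simp

theorem lemma1:
  fixes V :: "'v set" and E :: "('v \<times> 'v) set" and VE :: "'v set"
    and p :: "'v \<Rightarrow> nat" and \<rho> :: "'v \<Rightarrow> mval" and v :: 'v
  assumes "parity_game V E VE p"
    and "game_ppm V E VE p \<rho>"
    and "v \<in> V"
  shows "\<exists>\<sigma>. positional_strategy_even E VE \<sigma> \<and>
           (\<forall>\<pi>. is_play E \<pi> \<and> \<pi> 0 = v \<and> consistent_pos VE \<sigma> \<pi>
                  \<longrightarrow> mle (theta V p \<pi>) (\<rho> v))"
proof -
  obtain \<sigma> where \<sigma>: "positional_strategy_even E VE \<sigma>"
    "\<And>u. u \<in> VE \<Longrightarrow> ge_at (p u) (\<rho> u) (Prog V p \<rho> u (\<sigma> u))"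
    using ppm_strategy[OF assms(2)] by blast
  have "mle (theta V p \<pi>) (\<rho> v)"
    if play: "is_play E \<pi>" "\<pi> 0 = v" and consistent: "consistent_pos VE \<sigma> \<pi>" for \<pi>
  proof -
    have "ge_at (p (\<pi> n)) (\<rho> (\<pi> n)) (Prog V p \<rho> (\<pi> n) (\<pi> (Suc n)))" for n
    proof (cases "\<pi> n \<in> VE")
      case True
      then show ?thesis using \<sigma>(2) consistent unfolding consistent_pos_def by metis
    next
      case False
      moreover have "\<pi> n \<in> V" "\<pi> (Suc n) \<in> post E (\<pi> n)"
        using play_in_vertices[OF assms(1)] play assms(3) unfolding is_play_def post_def by auto
      ultimately show ?thesis using assms(2) unfolding game_ppm_def by blast
    qed
    then show ?thesis using ppm_bounds_theta[OF assms(1,2)] play assms(3) by blast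
  qed
  then show ?thesis using \<sigma>(1) by blast
qed

end
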